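(* For every integer $k\ge 2$, $\mathsf{{Mod_k}_{tot}P}=\mathsf{Mod_kP}$.
   Context: An NPTM is a non-deterministic polynomial-time Turing machine. For an NPTM $M$ and input $x$, $acc_M(x)$ is the number of accepting paths of $M$ on $x$ and $tot_M(x)$ is the number of all computation paths of $M$ on $x$ minus $1$. $\#\mathsf{P}=\{acc_M\}$, $\mathsf{TotP}=\{tot_M\}$ over all NPTMs $M$. $\mathsf{Mod_kP}$ is the class of languages $L$ for which there is $f\in\#\mathsf{P}$ such that $x\in L\iff f(x)\not\equiv 0\pmod{k}$. $\mathsf{{Mod_k}_{tot}P}$ is defined identically with $f\in\mathsf{TotP}$. *)

theory Defs
  imports Main
begin

text \<open>States and tape symbols are
natural numbers; symbol 0 is the blank, the input bits False/True are written as 1/2.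
A transition (q, a, q', b, d) means: in state q reading a, go to state q', write b,
move the head by d (with d in {-1,0,1}). A configuration is (state, head position, tape).\<close>

record ntm =
  delta :: "(nat \<times> nat \<times> nat \<times> nat \<times> int) set"
  start :: nat
  accepting :: "nat set"

type_synonym config = "nat \<times> int \<times> (int \<Rightarrow> nat)"

definition step :: "ntm \<Rightarrow> config \<Rightarrow> config \<Rightarrow> bool" where
  "step M c c' \<longleftrightarrow> (case c of (q, h, t) \<Rightarrow>
     (\<exists>q' b d. (q, t h, q', b, d) \<in> delta M \<and> c' = (q', h + d, t(h := b))))"

definition halted :: "ntm \<Rightarrow> config \<Rightarrow> bool" where
  "halted M c \<longleftrightarrow> \<not> (\<exists>c'. step M c c')"

definition init :: "ntm \<Rightarrow> bool list \<Rightarrow> config" where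
  "init M x = (start M, 0,
     (\<lambda>i. if 0 \<le> i \<and> i < int (length x) then (if x ! nat i then 2 else 1) else 0))"

definition is_path :: "ntm \<Rightarrow> bool list \<Rightarrow> config list \<Rightarrow> bool" where
  "is_path M x cs \<longleftrightarrow> cs \<noteq> [] \<and> hd cs = init M x
     \<and> (\<forall>i. Suc i < length cs \<longrightarrow> step M (cs ! i) (cs ! Suc i))
     \<and> halted M (last cs)"

definition paths :: "ntm \<Rightarrow> bool list \<Rightarrow> config list set" where
  "paths M x = {cs. is_path M x cs}"

definition nptm :: "ntm \<Rightarrow> bool" where
  "nptm M \<longleftrightarrow> finite (delta M)
     \<and> (\<forall>(q, a, q', b, d) \<in> delta M. d \<in> {-1, 0, 1})
     \<and> (\<exists>c::nat. \<forall>x n cfg. (step M ^^ n) (init M x) cfg \<longrightarrow> n \<le> c * length x ^ c + c)"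

definition acc :: "ntm \<Rightarrow> bool list \<Rightarrow> nat" where
  "acc M x = card {cs \<in> paths M x. fst (last cs) \<in> accepting M}"

definition tot :: "ntm \<Rightarrow> bool list \<Rightarrow> nat" where
  "tot M x = card (paths M x) - 1"

definition SharpP :: "(bool list \<Rightarrow> nat) set" where
  "SharpP = {f. \<exists>M. nptm M \<and> f = acc M}"

definition TotP :: "(bool list \<Rightarrow> nat) set" where
  "TotP = {f. \<exists>M. nptm M \<and> f = tot M}"

definition ModP :: "nat \<Rightarrow> bool list set set" where
  "ModP k = {L. \<exists>f \<in> SharpP. \<forall>x. x \<in> L \<longleftrightarrow> f x mod k \<noteq> 0}"

definition ModtotP :: "nat \<Rightarrow> bool list set set" where
  "ModtotP k = {L. \<exists>f \<in> TotP. \<forall>x. x \<in> L \<longleftrightarrow> f x mod k \<noteq> 0}"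

end

theory Submission
  imports Defs
begin

(* Both inclusions come from one padding construction: pad M m r A starts by either running M
   or halting at once in one of m extra leaves, and lets every rejecting leaf of M branch into
   r leaves, so it has acc M + r * rej M + m computation paths. Accepting everywhere with m = k - 1
   and r = 1 turns tot M into acc = tot M + k; with m = 1 and r = k the total count minus one is
   acc M + k * rej M, which is acc M modulo k. *)

section \<open>Paths from an arbitrary configuration\<close>

definition paths_from :: "ntm \<Rightarrow> config \<Rightarrow> config list set" where
  "paths_from M c = {cs. cs \<noteq> [] \<and> hd cs = c
     \<and> (\<forall>i. Suc i < length cs \<longrightarrow> step M (cs ! i) (cs ! Suc i)) \<and> halted M (last cs)}"

lemma paths_eq_paths_from_init: "paths M x = paths_from M (init M x)"
  by (simp add: paths_def paths_from_def is_path_def)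

lemma paths_from_halted:
  assumes "halted M c"
  shows "paths_from M c = {[c]}"
proof (intro set_eqI iffI)
  fix cs assume cs: "cs \<in> paths_from M c"
  then obtain rest where cs_eq: "cs = c # rest"
    unfolding paths_from_def by (cases cs) auto
  have "rest = []"
  proof (rule ccontr)
    assume "rest \<noteq> []"
    then have "step M (cs ! 0) (cs ! 1)"
      using cs cs_eq unfolding paths_from_def by auto
    with assms cs_eq show False
      unfolding halted_def by (metis nth_Cons_0)
  qed
  with cs_eq show "cs \<in> {[c]}" by simp
qed (use assms in \<open>auto simp: paths_from_def\<close>)

lemma sum_card_paths_from_halted:
  assumes "\<And>c. c \<in> S \<Longrightarrow> halted M c"
  shows "(\<Sum>c \<in> S. card (paths_from M c)) = card S"
  using assms by (simp add: paths_from_halted cong: sum.cong)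

lemma paths_from_step:
  assumes "\<not> halted M c"
  shows "paths_from M c = (\<Union>c' \<in> {c'. step M c c'}. (#) c ` paths_from M c')"
proof (intro set_eqI iffI)
  fix cs assume cs: "cs \<in> paths_from M c"
  then obtain rest where cs_eq: "cs = c # rest"
    unfolding paths_from_def by (cases cs) auto
  have rest_ne: "rest \<noteq> []"
    using assms cs cs_eq unfolding paths_from_def by auto
  have steps: "\<And>i. Suc i < length cs \<Longrightarrow> step M (cs ! i) (cs ! Suc i)"
    using cs unfolding paths_from_def by blast
  have "step M c (hd rest)"
    using steps[of 0] cs_eq rest_ne by (simp add: hd_conv_nth)
  moreover have "rest \<in> paths_from M (hd rest)"
    using cs cs_eq rest_ne steps[of "Suc _"] unfolding paths_from_def by auto
  ultimately show "cs \<in> (\<Union>c' \<in> {c'. step M c c'}. (#) c ` paths_from M c')"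
    using cs_eq by blast
next
  fix cs assume "cs \<in> (\<Union>c' \<in> {c'. step M c c'}. (#) c ` paths_from M c')"
  then obtain c' rest where st: "step M c c'" and rest: "rest \<in> paths_from M c'"
    and cs_eq: "cs = c # rest" by auto
  have "rest \<noteq> []" "hd rest = c'"
    using rest unfolding paths_from_def by auto
  then have "step M (cs ! i) (cs ! Suc i)" if "Suc i < length cs" for i
    using that st rest cs_eq unfolding paths_from_def by (cases i) (auto simp: hd_conv_nth)
  then show "cs \<in> paths_from M c"
    using rest cs_eq \<open>rest \<noteq> []\<close> unfolding paths_from_def by auto
qed

lemma finite_successors:
  assumes "finite (delta M)"
  shows "finite {c'. step M c c'}"
proof -
  obtain q h t where c: "c = (q, h, t)" by (cases c)
  have "{c'. step M c c'} \<subseteq> (\<lambda>(_, _, q', b, d). (q', h + d, t(h := b))) ` delta M"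
    unfolding c step_def by force
  then show ?thesis
    using assms finite_subset by blast
qed

lemma sum_paths_from_step:
  assumes "\<not> halted M c" and "finite {c'. step M c c'}"
    and "\<And>c'. step M c c' \<Longrightarrow> finite (paths_from M c')"
  shows "finite (paths_from M c)"
    and "(\<Sum>cs \<in> paths_from M c. f (last cs))
           = (\<Sum>c' | step M c c'. \<Sum>cs \<in> paths_from M c'. f (last cs))"
proof -
  show "finite (paths_from M c)"
    using assms by (simp add: paths_from_step)
  have "(\<Sum>cs \<in> paths_from M c. f (last cs))
          = (\<Sum>c' | step M c c'. \<Sum>cs \<in> (#) c ` paths_from M c'. f (last cs))"
    unfolding paths_from_step[OF assms(1)] using assms(2,3)
    by (intro sum.UNION_disjoint) (auto simp: paths_from_def)
  also have "\<dots> = (\<Sum>c' | step M c c'. \<Sum>cs \<in> paths_from M c'. f (last cs))"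
    by (intro sum.cong refl sum.reindex_cong[where l = "(#) c"]) (auto simp: paths_from_def)
  finally show "(\<Sum>cs \<in> paths_from M c. f (last cs))
           = (\<Sum>c' | step M c c'. \<Sum>cs \<in> paths_from M c'. f (last cs))" .
qed

lemma card_paths_from_step:
  assumes "\<not> halted M c" and "finite {c'. step M c c'}"
    and "\<And>c'. step M c c' \<Longrightarrow> finite (paths_from M c')"
  shows "card (paths_from M c) = (\<Sum>c' | step M c c'. card (paths_from M c'))"
  using sum_paths_from_step(2)[OF assms, where f = "\<lambda>_. 1 :: nat"] by simp

section \<open>Computations of bounded length\<close>

definition steps_bounded :: "ntm \<Rightarrow> nat \<Rightarrow> config \<Rightarrow> bool" where
  "steps_bounded M N c \<longleftrightarrow> (\<forall>n c'. (step M ^^ n) c c' \<longrightarrow> n \<le> N)"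

lemma steps_bounded_Suc_iff:
  "steps_bounded M (Suc N) c \<longleftrightarrow> (\<forall>c'. step M c c' \<longrightarrow> steps_bounded M N c')"
proof (intro iffI allI impI)
  fix c' assume "steps_bounded M (Suc N) c" and "step M c c'"
  then show "steps_bounded M N c'"
    unfolding steps_bounded_def by (metis Suc_le_mono relpowp_Suc_I2)
next
  assume succ: "\<forall>c'. step M c c' \<longrightarrow> steps_bounded M N c'"
  show "steps_bounded M (Suc N) c"
    unfolding steps_bounded_def
  proof (intro allI impI)
    fix n c'' assume steps: "(step M ^^ n) c c''"
    show "n \<le> Suc N"
    proof (cases n)
      case (Suc n')
      with steps obtain c' where "step M c c'" and "(step M ^^ n') c' c''"
        using relpowp_Suc_D2 by metis
      then have "n' \<le> N"
        using succ unfolding steps_bounded_def by blast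
      with Suc show ?thesis by simp
    qed simp
  qed
qed

lemma steps_bounded_SucD: "steps_bounded M (Suc N) c \<Longrightarrow> step M c c' \<Longrightarrow> steps_bounded M N c'"
  using steps_bounded_Suc_iff by blast

lemma steps_bounded_0_iff: "steps_bounded M 0 c \<longleftrightarrow> halted M c"
proof
  assume "steps_bounded M 0 c"
  then show "halted M c"
    unfolding steps_bounded_def halted_def by (metis relpowp_1 not_one_le_zero)
next
  assume "halted M c"
  then show "steps_bounded M 0 c"
    unfolding steps_bounded_def halted_def by (metis le_zero_eq not0_implies_Suc relpowp_Suc_D2)
qed

lemma steps_bounded_mono: "steps_bounded M N c \<Longrightarrow> N \<le> N' \<Longrightarrow> steps_bounded M N' c"
  unfolding steps_bounded_def by (meson order_trans)

lemma nptm_iff_steps_bounded: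
  "nptm M \<longleftrightarrow> finite (delta M) \<and> (\<forall>(q, a, q', b, d) \<in> delta M. d \<in> {-1, 0, 1})
     \<and> (\<exists>e. \<forall>x. steps_bounded M (e * length x ^ e + e) (init M x))"
  unfolding nptm_def steps_bounded_def by blast

lemma steps_bounded_induct [consumes 1, case_names step]:
  assumes "steps_bounded M N c"
    and "\<And>N c. steps_bounded M N c \<Longrightarrow> (\<And>c'. step M c c' \<Longrightarrow> P c') \<Longrightarrow> P c"
  shows "P c"
  using assms(1)
proof (induction N arbitrary: c)
  case 0
  show ?case
  proof (rule assms(2)[OF 0])
    fix c' assume "step M c c'"
    with 0 show "P c'"
      unfolding steps_bounded_0_iff halted_def by blast
  qed
next
  case (Suc N)
  show ?case
  proof (rule assms(2)[OF Suc.prems])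
    fix c' assume "step M c c'"
    with Suc show "P c'"
      unfolding steps_bounded_Suc_iff by blast
  qed
qed

lemma finite_paths_from:
  assumes "finite (delta M)" and "steps_bounded M N c"
  shows "finite (paths_from M c)"
  using assms(2)
proof (induction rule: steps_bounded_induct)
  case (step N c)
  show ?case
  proof (cases "halted M c")
    case False
    then show ?thesis
      using sum_paths_from_step(1) finite_successors assms(1) step.IH by blast
  qed (simp add: paths_from_halted)
qed

lemma paths_from_nonempty:
  assumes "steps_bounded M N c"
  shows "paths_from M c \<noteq> {}"
  using assms
proof (induction rule: steps_bounded_induct)
  case (step N c)
  show ?case
  proof (cases "halted M c")
    case False
    then obtain c' where "step M c c'"
      unfolding halted_def by blast
    moreover from this obtain cs where "cs \<in> paths_from M c'"
      using step.IH by blast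
    ultimately have "c # cs \<in> paths_from M c"
      unfolding paths_from_step[OF False] by blast
    then show ?thesis by blast
  qed (simp add: paths_from_halted)
qed

section \<open>The padding construction\<close>

definition states :: "ntm \<Rightarrow> nat set" where
  "states M = insert (start M)
     ((\<lambda>(q, a, q', b, d). q) ` delta M \<union> (\<lambda>(q, a, q', b, d). q') ` delta M)"

definition symbols :: "ntm \<Rightarrow> nat set" where
  "symbols M = {0, 1, 2} \<union> (\<lambda>(q, a, q', b, d). a) ` delta M \<union> (\<lambda>(q, a, q', b, d). b) ` delta M"

definition fresh_state :: "ntm \<Rightarrow> nat" where
  "fresh_state M = Suc (Max (states M))"

definition sink :: "ntm \<Rightarrow> nat \<Rightarrow> nat" where
  "sink M j = fresh_state M + Suc j"

(* The branching transitions are only added for states and symbols occurring in M, which keeps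
   delta finite; by wf_config_step these cover every reachable halting configuration. *)
definition pad :: "ntm \<Rightarrow> nat \<Rightarrow> nat \<Rightarrow> nat set \<Rightarrow> ntm" where
  "pad M m r A = \<lparr>delta = delta M
     \<union> {(fresh_state M, a, start M, a, 0) | a. a \<le> 2}
     \<union> {(fresh_state M, a, sink M j, a, 0) | a j. a \<le> 2 \<and> j < m}
     \<union> {(q, a, sink M j, a, 0) | q a j. q \<in> states M \<and> q \<notin> accepting M \<and> a \<in> symbols M
          \<and> \<not> (\<exists>q' b d. (q, a, q', b, d) \<in> delta M) \<and> j < r},
     start = fresh_state M, accepting = A\<rparr>"

fun wf_config :: "ntm \<Rightarrow> config \<Rightarrow> bool" where
  "wf_config M (q, h, t) \<longleftrightarrow> q \<in> states M \<and> range t \<subseteq> symbols M"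

definition input_tape :: "bool list \<Rightarrow> int \<Rightarrow> nat" where
  "input_tape x i = (if 0 \<le> i \<and> i < int (length x) then (if x ! nat i then 2 else 1) else 0)"

lemma init_eq: "init M x = (start M, 0, input_tape x)"
  by (simp add: init_def input_tape_def fun_eq_iff)

lemma step_iff:
  "step M (q, h, t) c' \<longleftrightarrow> (\<exists>q' b d. (q, t h, q', b, d) \<in> delta M \<and> c' = (q', h + d, t(h := b)))"
  by (simp add: step_def)

lemma halted_iff: "halted M (q, h, t) \<longleftrightarrow> \<not> (\<exists>q' b d. (q, t h, q', b, d) \<in> delta M)"
  by (auto simp: halted_def step_def)

lemma less_fresh_state:
  assumes "finite (delta M)" and "q \<in> states M"
  shows "q < fresh_state M"
  using assms by (simp add: fresh_state_def states_def le_imp_less_Suc)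

lemma fresh_state_less_sink: "fresh_state M < sink M j"
  by (simp add: sink_def)

lemma sink_inject [simp]: "sink M i = sink M j \<longleftrightarrow> i = j"
  by (simp add: sink_def)

lemma start_neq_sink:
  assumes "finite (delta M)"
  shows "start M \<noteq> sink M j"
  using less_fresh_state[OF assms, of "start M"] fresh_state_less_sink[of M j]
  by (simp add: states_def)

lemma wf_config_init: "wf_config M (init M x)"
  by (auto simp: init_eq input_tape_def states_def symbols_def)

lemma wf_config_step:
  assumes "step M c c'" and "wf_config M c"
  shows "wf_config M c'"
proof -
  obtain q h t where c: "c = (q, h, t)" by (cases c)
  from assms(1) obtain q' b d where tr: "(q, t h, q', b, d) \<in> delta M"
    and c': "c' = (q', h + d, t(h := b))"
    unfolding c step_iff by blast
  have "q' \<in> states M" and "b \<in> symbols M"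
    using tr unfolding states_def symbols_def by force+
  with assms(2) show ?thesis
    unfolding c c' by auto
qed

lemma finite_delta_pad:
  assumes "finite (delta M)"
  shows "finite (delta (pad M m r A))"
proof -
  have "{(fresh_state M, a, start M, a, 0::int) | a. a \<le> (2::nat)}
          = (\<lambda>a. (fresh_state M, a, start M, a, 0)) ` {..2}"
    by auto
  moreover have "{(fresh_state M, a, sink M j, a, 0::int) | a j. a \<le> (2::nat) \<and> j < m}
          \<subseteq> (\<lambda>(a, j). (fresh_state M, a, sink M j, a, 0)) ` ({..2} \<times> {..<m})"
    by auto
  moreover have "{(q, a, sink M j, a, 0::int) | q a j. q \<in> states M \<and> q \<notin> accepting M
          \<and> a \<in> symbols M \<and> \<not> (\<exists>q' b d. (q, a, q', b, d) \<in> delta M) \<and> j < r}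
          \<subseteq> (\<lambda>(q, a, j). (q, a, sink M j, a, 0)) ` (states M \<times> symbols M \<times> {..<r})"
    by force
  moreover have "finite (states M)" "finite (symbols M)"
    using assms by (simp_all add: states_def symbols_def)
  ultimately show ?thesis
    using assms unfolding pad_def
    by (simp, meson finite_SigmaI finite_imageI finite_lessThan finite_subset finite_atMost)
qed

lemma step_pad:
  assumes "finite (delta M)" and "wf_config M (q, h, t)"
  shows "step (pad M m r A) (q, h, t) c' \<longleftrightarrow> step M (q, h, t) c'
     \<or> (halted M (q, h, t) \<and> q \<notin> accepting M \<and> (\<exists>j<r. c' = (sink M j, h, t)))"
proof -
  have "q \<noteq> fresh_state M"
    using less_fresh_state[OF assms(1)] assms(2) by fastforce
  moreover have "t h \<in> symbols M"
    using assms(2) by auto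
  ultimately show ?thesis
    using assms(2) unfolding step_iff halted_iff pad_def by auto
qed

lemma halted_pad_sink:
  assumes "finite (delta M)"
  shows "halted (pad M m r A) (sink M j, h, t)"
proof -
  have "sink M j \<notin> states M"
    using less_fresh_state[OF assms] fresh_state_less_sink[of M j] by fastforce
  moreover from this have "(sink M j, a, q', b, d) \<notin> delta M" for a q' b d
    unfolding states_def by force
  moreover have "sink M j \<noteq> fresh_state M"
    using fresh_state_less_sink[of M j] by simp
  ultimately show ?thesis
    unfolding halted_iff pad_def by auto
qed

lemma step_pad_init:
  assumes "finite (delta M)"
  shows "step (pad M m r A) (init (pad M m r A) x) c'
     \<longleftrightarrow> c' = init M x \<or> (\<exists>j<m. c' = (sink M j, 0, input_tape x))"
proof -
  have "fresh_state M \<notin> states M"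
    using less_fresh_state[OF assms] by blast
  then have "(fresh_state M, a, q', b, d) \<notin> delta M" for a q' b d
    unfolding states_def by force
  moreover have "input_tape x 0 \<le> 2"
    by (simp add: input_tape_def)
  ultimately show ?thesis
    unfolding init_eq step_iff pad_def using \<open>fresh_state M \<notin> states M\<close> start_neq_sink[OF assms]
    by auto (metis fun_upd_triv)
qed

lemma step_pad_not_halted:
  assumes "finite (delta M)" and "wf_config M c" and "\<not> halted M c"
  shows "step (pad M m r A) c = step M c"
proof -
  obtain q h t where c: "c = (q, h, t)" by (cases c)
  show ?thesis
  proof
    fix c'
    show "step (pad M m r A) c c' = step M c c'"
      using assms step_pad[OF assms(1), where q = q and h = h and t = t] unfolding c by simp
  qed
qed

lemma step_pad_halted:
  assumes "finite (delta M)" and "wf_config M (q, h, t)" and "halted M (q, h, t)"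
  shows "step (pad M m r A) (q, h, t) c' \<longleftrightarrow> q \<notin> accepting M \<and> (\<exists>j<r. c' = (sink M j, h, t))"
proof -
  have "\<not> step M (q, h, t) c'"
    using assms(3) unfolding halted_def by blast
  with assms(2,3) show ?thesis
    using step_pad[OF assms(1), where q = q and h = h and t = t] by simp
qed

lemma halted_successors_steps_bounded:
  assumes "\<And>c'. step M c c' \<Longrightarrow> halted M c'"
  shows "steps_bounded M (Suc N) c"
  using assms steps_bounded_mono[of M 0] by (simp add: steps_bounded_Suc_iff steps_bounded_0_iff)

lemma halted_pad_step_halted:
  assumes "finite (delta M)" and "wf_config M c" and "halted M c"
    and "step (pad M m r A) c c'"
  shows "halted (pad M m r A) c'"
proof -
  obtain q h t where c: "c = (q, h, t)" by (cases c)
  with assms obtain j where "c' = (sink M j, h, t)"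
    using step_pad_halted[OF assms(1)] by blast
  then show ?thesis
    using halted_pad_sink[OF assms(1)] by simp
qed

lemma steps_bounded_pad:
  assumes "finite (delta M)"
  shows "steps_bounded M N c \<Longrightarrow> wf_config M c \<Longrightarrow> steps_bounded (pad M m r A) (Suc N) c"
proof (induction N arbitrary: c)
  case 0
  then show ?case
    using halted_pad_step_halted[OF assms] halted_successors_steps_bounded
    unfolding steps_bounded_0_iff by blast
next
  case (Suc N)
  show ?case
  proof (cases "halted M c")
    case True
    then show ?thesis
      using halted_pad_step_halted[OF assms Suc.prems(2)] halted_successors_steps_bounded by blast
  next
    case False
    have "steps_bounded (pad M m r A) (Suc N) c'" if "step (pad M m r A) c c'" for c'
    proof -
      from that have "step M c c'"
        using step_pad_not_halted[OF assms Suc.prems(2) False] by simp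
      then show ?thesis
        using Suc wf_config_step unfolding steps_bounded_Suc_iff[of M] by blast
    qed
    then show ?thesis
      unfolding steps_bounded_Suc_iff[of "pad M m r A" "Suc N"] by blast
  qed
qed

lemma steps_bounded_pad_init:
  assumes "finite (delta M)" and "steps_bounded M N (init M x)"
  shows "steps_bounded (pad M m r A) (Suc (Suc N)) (init (pad M m r A) x)"
proof -
  have "steps_bounded (pad M m r A) (Suc N) c'" if "step (pad M m r A) (init (pad M m r A) x) c'" for c'
  proof (cases "c' = init M x")
    case True
    then show ?thesis
      using steps_bounded_pad[OF assms wf_config_init] by simp
  next
    case False
    with that obtain j where "c' = (sink M j, 0, input_tape x)"
      unfolding step_pad_init[OF assms(1)] by blast
    then have "steps_bounded (pad M m r A) 0 c'"
      using halted_pad_sink[OF assms(1)] steps_bounded_0_iff by simp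
    then show ?thesis
      using steps_bounded_mono by blast
  qed
  then show ?thesis
    unfolding steps_bounded_Suc_iff[of _ "Suc N"] by blast
qed

lemma poly_bound_add_2: "e * l ^ e + e + 2 \<le> (e + 2) * l ^ (e + 2) + (e + 2 :: nat)"
proof (cases "l = 0")
  case False
  then have "e * l ^ e \<le> (e + 2) * l ^ (e + 2)"
    by (intro mult_le_mono) (simp_all add: power_increasing)
  then show ?thesis by simp
qed (cases e; simp)

lemma nptm_pad:
  assumes "nptm M"
  shows "nptm (pad M m r A)"
proof -
  have fin: "finite (delta M)"
    using assms by (simp add: nptm_def)
  from assms obtain e where bound: "\<And>x. steps_bounded M (e * length x ^ e + e) (init M x)"
    unfolding nptm_iff_steps_bounded by blast
  have "steps_bounded (pad M m r A) ((e + 2) * length x ^ (e + 2) + (e + 2)) (init (pad M m r A) x)"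
    for x
    using steps_bounded_pad_init[OF fin bound] poly_bound_add_2 steps_bounded_mono
    by (metis add_2_eq_Suc')
  moreover have "\<forall>(q, a, q', b, d) \<in> delta (pad M m r A). d \<in> {-1, 0, 1}"
    using assms unfolding nptm_def pad_def by auto
  ultimately show ?thesis
    unfolding nptm_iff_steps_bounded using finite_delta_pad[OF fin] by blast
qed

section \<open>Counting the paths of the padded machine\<close>

definition rej :: "ntm \<Rightarrow> bool list \<Rightarrow> nat" where
  "rej M x = card {cs \<in> paths M x. fst (last cs) \<notin> accepting M}"

lemma card_paths_from_pad_halted:
  assumes "finite (delta M)" and "r > 0" and "wf_config M c" and "halted M c"
  shows "card (paths_from (pad M m r A) c) = (if fst c \<in> accepting M then 1 else r)"
proof -
  obtain q h t where c: "c = (q, h, t)" by (cases c)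
  show ?thesis
  proof (cases "q \<in> accepting M")
    case True
    then have "halted (pad M m r A) c"
      using step_pad_halted[OF assms(1)] assms(3,4) unfolding c halted_def by blast
    then show ?thesis
      using True by (simp add: paths_from_halted c)
  next
    case False
    let ?sinks = "(\<lambda>j. (sink M j, h, t)) ` {..<r}"
    have succ: "{c'. step (pad M m r A) c c'} = ?sinks"
      using step_pad_halted[OF assms(1)] assms(3,4) False unfolding c by blast
    then have "\<not> halted (pad M m r A) c"
      using assms(2) unfolding halted_def by blast
    then have "card (paths_from (pad M m r A) c)
                 = (\<Sum>c' | step (pad M m r A) c c'. card (paths_from (pad M m r A) c'))"
      using halted_pad_step_halted[OF assms(1,3,4)]
      by (intro card_paths_from_step finite_successors finite_delta_pad assms(1))
        (simp_all add: paths_from_halted)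
    also have "\<dots> = (\<Sum>c' \<in> ?sinks. card (paths_from (pad M m r A) c'))"
      unfolding succ ..
    also have "\<dots> = r"
      by (subst sum_card_paths_from_halted)
        (use halted_pad_sink[OF assms(1)] in \<open>auto simp: card_image inj_on_def\<close>)
    finally show ?thesis
      using False c by simp
  qed
qed

lemma card_paths_from_pad:
  assumes "finite (delta M)" and "r > 0" and "steps_bounded M N c" and "wf_config M c"
  shows "card (paths_from (pad M m r A) c)
           = (\<Sum>cs \<in> paths_from M c. if fst (last cs) \<in> accepting M then 1 else r)"
  using assms(3,4)
proof (induction rule: steps_bounded_induct)
  case (step N c)
  show ?case
  proof (cases "halted M c")
    case True
    then show ?thesis
      using card_paths_from_pad_halted[OF assms(1,2) step.prems] by (simp add: paths_from_halted)
  next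
    case False
    let ?w = "\<lambda>c. if fst c \<in> accepting M then 1 else r"
    have succ: "step (pad M m r A) c = step M c"
      using step_pad_not_halted[OF assms(1) step.prems False] .
    have bounded: "steps_bounded M N c'" if "step M c c'" for c'
    proof -
      have "steps_bounded M (Suc N) c"
        using steps_bounded_mono[OF step.hyps] by simp
      then show ?thesis
        using that by (rule steps_bounded_SucD)
    qed
    have finite_pad: "finite (paths_from (pad M m r A) c')" if "step M c c'" for c'
      using finite_paths_from[OF finite_delta_pad[OF assms(1)]
          steps_bounded_pad[OF assms(1) bounded[OF that] wf_config_step[OF that step.prems]]] .
    have "\<not> halted (pad M m r A) c"
      using False unfolding halted_def succ .
    then have "card (paths_from (pad M m r A) c)
                 = (\<Sum>c' | step (pad M m r A) c c'. card (paths_from (pad M m r A) c'))"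
      by (rule card_paths_from_step[OF _ finite_successors[OF finite_delta_pad[OF assms(1)]]])
        (simp add: succ finite_pad)
    also have "\<dots> = (\<Sum>c' | step M c c'. \<Sum>cs \<in> paths_from M c'. ?w (last cs))"
      using step.IH wf_config_step step.prems by (simp add: succ)
    also have "\<dots> = (\<Sum>cs \<in> paths_from M c. ?w (last cs))"
      using finite_paths_from[OF assms(1) bounded]
      by (rule sum_paths_from_step(2)[OF False finite_successors[OF assms(1)], symmetric])
    finally show ?thesis .
  qed
qed

lemma nptm_steps_bounded_init:
  assumes "nptm M"
  obtains N where "steps_bounded M N (init M x)"
  using assms unfolding nptm_iff_steps_bounded by blast

lemma finite_paths: "nptm M \<Longrightarrow> finite (paths M x)"
  by (metis finite_paths_from nptm_def nptm_steps_bounded_init paths_eq_paths_from_init)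

lemma paths_nonempty: "nptm M \<Longrightarrow> paths M x \<noteq> {}"
  by (metis paths_from_nonempty nptm_steps_bounded_init paths_eq_paths_from_init)

lemma sum_accepting_weights:
  assumes "finite P"
  shows "(\<Sum>cs \<in> P. if fst (last cs) \<in> accepting M then 1 else r)
           = card {cs \<in> P. fst (last cs) \<in> accepting M} + r * card {cs \<in> P. fst (last cs) \<notin> accepting M}"
  using assms by (simp add: sum.If_cases Int_def conj_commute)

lemma card_paths_pad:
  assumes "nptm M" and "r > 0"
  shows "card (paths (pad M m r A) x) = acc M x + r * rej M x + m"
proof -
  have fin: "finite (delta M)"
    using assms(1) by (simp add: nptm_def)
  obtain N where bound: "steps_bounded M N (init M x)"
    using nptm_steps_bounded_init[OF assms(1)] .
  let ?P = "pad M m r A"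
  let ?sinks = "(\<lambda>j. (sink M j, 0, input_tape x)) ` {..<m}"
  have succ: "{c'. step ?P (init ?P x) c'} = insert (init M x) ?sinks"
    using step_pad_init[OF fin] by blast
  have "\<not> halted ?P (init ?P x)"
    unfolding halted_def using succ by blast
  moreover have "finite (paths_from ?P c')" if "step ?P (init ?P x) c'" for c'
    using that halted_pad_sink[OF fin]
      finite_paths_from[OF finite_delta_pad[OF fin] steps_bounded_pad[OF fin bound wf_config_init]]
    unfolding step_pad_init[OF fin] by (auto simp: paths_from_halted)
  ultimately have "card (paths ?P x) = (\<Sum>c' | step ?P (init ?P x) c'. card (paths_from ?P c'))"
    unfolding paths_eq_paths_from_init
    by (rule card_paths_from_step[OF _ finite_successors[OF finite_delta_pad[OF fin]]])
  also have "\<dots> = card (paths_from ?P (init M x)) + (\<Sum>c' \<in> ?sinks. card (paths_from ?P c'))"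
  proof -
    have "init M x \<notin> ?sinks"
      using start_neq_sink[OF fin] by (auto simp: init_eq)
    then show ?thesis
      unfolding succ by simp
  qed
  also have "(\<Sum>c' \<in> ?sinks. card (paths_from ?P c')) = m"
    by (subst sum_card_paths_from_halted)
      (use halted_pad_sink[OF fin] in \<open>auto simp: card_image inj_on_def\<close>)
  also have "card (paths_from ?P (init M x)) = acc M x + r * rej M x"
    using card_paths_from_pad[OF fin assms(2) bound wf_config_init] finite_paths_from[OF fin bound]
    by (simp add: sum_accepting_weights acc_def rej_def paths_eq_paths_from_init)
  finally show ?thesis .
qed

lemma acc_add_rej:
  assumes "nptm M"
  shows "acc M x + rej M x = card (paths M x)"
  using sum_accepting_weights[OF finite_paths[OF assms], of M 1] by (simp add: acc_def rej_def)

lemma acc_pad_accept_all: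
  assumes "nptm M"
  shows "acc (pad M m 1 UNIV) x = tot M x + m + 1"
proof -
  have "acc (pad M m 1 UNIV) x = card (paths (pad M m 1 UNIV) x)"
    by (simp add: acc_def pad_def)
  also have "\<dots> = card (paths M x) + m"
    using card_paths_pad[OF assms, of 1] acc_add_rej[OF assms] by simp
  also have "\<dots> = tot M x + m + 1"
  proof -
    have "card (paths M x) > 0"
      using paths_nonempty[OF assms] finite_paths[OF assms] by (simp add: card_gt_0_iff)
    then show ?thesis
      by (simp add: tot_def)
  qed
  finally show ?thesis .
qed

lemma tot_pad:
  assumes "nptm M" and "r > 0"
  shows "tot (pad M 1 r A) x = acc M x + r * rej M x"
  using card_paths_pad[OF assms] by (simp add: tot_def)

lemma ModtotP_subset_ModP:
  assumes "k > 0"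
  shows "ModtotP k \<subseteq> ModP k"
proof
  fix L assume "L \<in> ModtotP k"
  then obtain M where M: "nptm M" and L: "\<forall>x. x \<in> L \<longleftrightarrow> tot M x mod k \<noteq> 0"
    unfolding ModtotP_def TotP_def by blast
  have "x \<in> L \<longleftrightarrow> acc (pad M (k - 1) 1 UNIV) x mod k \<noteq> 0" for x
    using L acc_pad_accept_all[OF M, of "k - 1"] assms by simp
  then show "L \<in> ModP k"
    using nptm_pad[OF M] unfolding ModP_def SharpP_def by blast
qed

lemma ModP_subset_ModtotP:
  assumes "k > 0"
  shows "ModP k \<subseteq> ModtotP k"
proof
  fix L assume "L \<in> ModP k"
  then obtain M where M: "nptm M" and L: "\<forall>x. x \<in> L \<longleftrightarrow> acc M x mod k \<noteq> 0"
    unfolding ModP_def SharpP_def by blast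
  have "x \<in> L \<longleftrightarrow> tot (pad M 1 k {}) x mod k \<noteq> 0" for x
    using L tot_pad[OF M assms] by simp
  then show "L \<in> ModtotP k"
    using nptm_pad[OF M] unfolding ModtotP_def TotP_def by blast
qed

theorem proposition10:
  fixes k :: nat
  assumes "k \<ge> 2"
  shows "ModtotP k = ModP k"
  using assms ModtotP_subset_ModP ModP_subset_ModtotP by (simp add: subset_antisym)

end
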